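(* Let $\{X_m\}$ be nonnegative random variables and $b_m>0$ with $b_m\to\infty$. (a) Suppose there are $p>1$ and $C_0>0$ such that for every $\beta>0$, $\limsup_{m\to\infty}b_m^{-1}\log\mathbb{E}\exp\{\beta X_m\}\le C_0\beta^p$ and $\liminf_{m\to\infty}b_m^{-1}\log\mathbb{E}\exp\{\beta b_m^{1/2}X_m^{1/2}\}\ge\frac{p+1}{p}(pC_0)^{1/(p+1)}(\beta/2)^{2p/(p+1)}$. Then $\lim_{m\to\infty}b_m^{-1}\log\mathbb{E}\exp\{\beta X_m\}=C_0\beta^p$ for all $\beta>0$. (b) The same conclusion holds if instead, for every $\beta>0$, $\limsup_{m\to\infty}b_m^{-1}\log\mathbb{E}\exp\{\beta X_m\}<\infty$ and $\lim_{m\to\infty}b_m^{-1}\log\mathbb{E}\exp\{\beta b_m^{1/2}X_m^{1/2}\}=\frac{p+1}{p}(pC_0)^{1/(p+1)}(\beta/2)^{2p/(p+1)}$, for some $p>1$, $C_0>0$. *)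

theory Defs
  imports "HOL-Probability.Probability"
begin

text \<open>Logarithm of E exp(Y) as an extended real; equals infinity when the
  expectation is infinite (it is always positive on a probability space).\<close>
definition log_Eexp :: "'a measure \<Rightarrow> ('a \<Rightarrow> real) \<Rightarrow> ereal" where
  "log_Eexp M Y =
     (let I = (\<integral>\<^sup>+ x. ennreal (exp (Y x)) \<partial>M)
      in if I = \<top> then \<infinity> else ereal (ln (enn2real I)))"

end

theory Submission
  imports Defs
begin

text \<open>
  Write L(\<theta>) for the limit of log E exp (\<theta> X) / b and L'(\<beta>) for that of
  log E exp (\<beta> sqrt (b X)) / b. The pointwise bound \<beta> sqrt (b x) \<le> \<theta> x + b \<beta>^2 / (4 \<theta>)
  gives L(\<theta>) \<ge> L'(\<beta>) - \<beta>^2 / (4 \<theta>). The prescribed L'(\<beta>) is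
  K(\<beta>) = inf {C0 t^p + \<beta>^2 / (4 t) | t > 0}, so choosing \<beta> such that the infimum is
  attained at t = \<theta> yields L(\<theta>) \<ge> C0 \<theta>^p.

  Conversely, with u = sqrt (X / b) we have \<theta> X = b \<theta> u^2, and on each interval
  [k \<delta>, (k + 1) \<delta>] the parabola \<theta> u^2 lies below its chord, which is affine in sqrt (b X).
  Hence exp (\<theta> X) is dominated by N moments of sqrt X, each controlled by K, plus a tail
  term for u \<ge> N \<delta> that the finite moment at 2 \<theta> makes negligible for large N. A sum of
  N + 1 exponentials grows like its largest term, so L(\<theta>) \<le> C0 \<theta>^p.
\<close>

lemma powr_plus_div_ge:
  fixes s p :: real
  assumes "s > 0" "p > 0"
  shows "p + 1 \<le> s powr p + p / s"
proof -
  have "(s powr p) powr (1 / (p + 1)) * (1 / s) powr (p / (p + 1))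
      \<le> 1 / (p + 1) * s powr p + p / (p + 1) * (1 / s)" (is "_ \<le> ?mean")
    using assms by (intro Youngs_inequality_0) (auto simp: add_divide_distrib[symmetric])
  moreover have "(s powr p) powr (1 / (p + 1)) * (1 / s) powr (p / (p + 1)) = 1"
    using assms by (simp add: powr_powr powr_divide powr_add[symmetric])
  ultimately have "(p + 1) * 1 \<le> (p + 1) * ?mean"
    using assms by (intro mult_left_mono) auto
  also have "(p + 1) * ?mean = s powr p + p / s"
    using assms by (simp add: distrib_left)
  finally show ?thesis by simp
qed

text \<open>The infimum of C0 t^p + \<beta>^2 / (4 t) over t > 0; see sqrt_mgf_rate_le and
  sqrt_mgf_rate_attained.\<close>

definition sqrt_mgf_rate :: "real \<Rightarrow> real \<Rightarrow> real \<Rightarrow> real" where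
  "sqrt_mgf_rate p C0 \<beta> =
     (p + 1) / p * (p * C0) powr (1 / (p + 1)) * (\<beta> / 2) powr (2 * p / (p + 1))"

lemma sqrt_mgf_rate_eq:
  assumes p: "p > 0" and C0: "C0 > 0" and t: "t > 0" and \<beta>: "\<beta> > 0"
    and balance: "(\<beta> / 2)\<^sup>2 = p * C0 * t powr (p + 1)"
  shows "sqrt_mgf_rate p C0 \<beta> = (p + 1) * C0 * t powr p"
proof -
  have "(\<beta> / 2) powr (2 * p / (p + 1)) = ((\<beta> / 2) powr 2) powr (p / (p + 1))"
    by (simp add: powr_powr)
  also have "\<dots> = ((\<beta> / 2)\<^sup>2) powr (p / (p + 1))"
    using \<beta> by (simp add: powr_realpow)
  also have "\<dots> = (p * C0) powr (p / (p + 1)) * t powr p"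
    using p C0 t by (simp add: balance powr_mult powr_powr)
  finally have "sqrt_mgf_rate p C0 \<beta>
      = (p + 1) / p * ((p * C0) powr (1 / (p + 1)) * (p * C0) powr (p / (p + 1))) * t powr p"
    unfolding sqrt_mgf_rate_def by (simp add: mult_ac)
  also have "(p * C0) powr (1 / (p + 1)) * (p * C0) powr (p / (p + 1)) = p * C0"
    using p C0 by (simp add: powr_add[symmetric] add_divide_distrib[symmetric] add.commute)
  finally show ?thesis using p by simp
qed

lemma sqrt_mgf_rate_le:
  assumes p: "p > 0" and C0: "C0 > 0" and \<beta>: "\<beta> > 0" and t: "t > 0"
  shows "sqrt_mgf_rate p C0 \<beta> \<le> C0 * t powr p + \<beta>\<^sup>2 / (4 * t)"
proof -
  define t0 where "t0 = ((\<beta> / 2)\<^sup>2 / (p * C0)) powr (1 / (p + 1))"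
  have t0: "t0 > 0" using assms by (simp add: t0_def)
  have balance: "(\<beta> / 2)\<^sup>2 = p * C0 * t0 powr (p + 1)"
    using assms by (simp add: t0_def powr_powr)
  have "(p + 1) * (C0 * t0 powr p) \<le> ((t / t0) powr p + p / (t / t0)) * (C0 * t0 powr p)"
    using powr_plus_div_ge[of "t / t0" p] t t0 p C0 by (intro mult_right_mono) auto
  also have "\<dots> = C0 * t powr p + p * C0 * t0 powr (p + 1) / t"
    using t t0 by (simp add: powr_divide powr_add field_simps)
  finally show ?thesis
    using sqrt_mgf_rate_eq[OF p C0 t0 \<beta> balance] balance
    by (simp add: power_divide mult_ac)
qed

lemma sqrt_mgf_rate_attained:
  assumes p: "p > 0" and C0: "C0 > 0" and t: "t > 0"
  obtains \<beta> where "\<beta> > 0" "sqrt_mgf_rate p C0 \<beta> = C0 * t powr p + \<beta>\<^sup>2 / (4 * t)"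
proof
  define \<beta> where "\<beta> = 2 * sqrt (p * C0 * t powr (p + 1))"
  show "\<beta> > 0" using assms by (simp add: \<beta>_def)
  have balance: "(\<beta> / 2)\<^sup>2 = p * C0 * t powr (p + 1)"
    using assms by (simp add: \<beta>_def)
  then have "\<beta>\<^sup>2 / (4 * t) = p * C0 * t powr p"
    using t by (simp add: power_divide powr_add field_simps)
  then show "sqrt_mgf_rate p C0 \<beta> = C0 * t powr p + \<beta>\<^sup>2 / (4 * t)"
    using sqrt_mgf_rate_eq[OF p C0 t _ balance] \<open>\<beta> > 0\<close> by (simp add: algebra_simps)
qed

lemma nn_integral_exp_ge_1:
  assumes "prob_space M" "\<And>x. x \<in> space M \<Longrightarrow> 0 \<le> f x"
  shows "1 \<le> (\<integral>\<^sup>+ x. ennreal (exp (f x)) \<partial>M)"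
proof -
  have "(\<integral>\<^sup>+ x. 1 \<partial>M) \<le> (\<integral>\<^sup>+ x. ennreal (exp (f x)) \<partial>M)"
    using assms(2) by (intro nn_integral_mono) simp
  then show ?thesis
    using prob_space.emeasure_space_1[OF assms(1)] by simp
qed

lemma log_Eexp_eq_ln:
  assumes "prob_space M" "\<And>x. x \<in> space M \<Longrightarrow> 0 \<le> f x"
    and "(\<integral>\<^sup>+ x. ennreal (exp (f x)) \<partial>M) = ennreal I"
  shows "log_Eexp M f = ereal (ln I)" "I \<ge> 1"
proof -
  show "I \<ge> 1"
    using nn_integral_exp_ge_1[of M f] assms
    by (simp add: ennreal_1[symmetric] ennreal_le_iff2 del: ennreal_1)
  then show "log_Eexp M f = ereal (ln I)"
    using assms(3) by (simp add: log_Eexp_def)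
qed

lemma scaled_log_Eexp_le_iff:
  assumes "prob_space M" "\<And>x. x \<in> space M \<Longrightarrow> 0 \<le> f x" "b > 0"
  shows "ereal (1 / b) * log_Eexp M f \<le> ereal r
           \<longleftrightarrow> (\<integral>\<^sup>+ x. ennreal (exp (f x)) \<partial>M) \<le> ennreal (exp (b * r))"
proof (cases "(\<integral>\<^sup>+ x. ennreal (exp (f x)) \<partial>M) = \<top>")
  case True
  then show ?thesis using assms(3) by (simp add: log_Eexp_def top_unique)
next
  case False
  then obtain I where I: "(\<integral>\<^sup>+ x. ennreal (exp (f x)) \<partial>M) = ennreal I" "I \<ge> 0"
    using ennreal_cases by (metis top_neq_ennreal)
  note fin = log_Eexp_eq_ln[OF assms(1,2) I(1)]
  have "ln I / b \<le> r \<longleftrightarrow> ln I \<le> b * r"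
    using assms(3) by (simp add: divide_le_eq mult.commute)
  also have "\<dots> \<longleftrightarrow> I \<le> exp (b * r)"
    using fin(2) by (metis exp_le_cancel_iff exp_ln less_le_trans zero_less_one)
  finally show ?thesis
    using I fin by simp
qed

lemma log_Eexp_le_add:
  assumes M: "prob_space M" and f: "\<And>x. x \<in> space M \<Longrightarrow> 0 \<le> f x"
    and g: "g \<in> borel_measurable M"
    and le: "\<And>x. x \<in> space M \<Longrightarrow> f x \<le> g x + a"
  shows "log_Eexp M f \<le> log_Eexp M g + ereal a"
proof -
  have "(\<integral>\<^sup>+ x. ennreal (exp (f x)) \<partial>M) \<le> (\<integral>\<^sup>+ x. ennreal (exp a) * ennreal (exp (g x)) \<partial>M)"
    using le by (intro nn_integral_mono) (simp add: ennreal_mult[symmetric] mult_exp_exp add.commute)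
  also have "\<dots> = ennreal (exp a) * (\<integral>\<^sup>+ x. ennreal (exp (g x)) \<partial>M)"
    using g by (intro nn_integral_cmult) measurable
  finally have int_le: "(\<integral>\<^sup>+ x. ennreal (exp (f x)) \<partial>M)
      \<le> ennreal (exp a) * (\<integral>\<^sup>+ x. ennreal (exp (g x)) \<partial>M)" .
  show ?thesis
  proof (cases "(\<integral>\<^sup>+ x. ennreal (exp (g x)) \<partial>M) = \<top>")
    case True
    then show ?thesis by (simp add: log_Eexp_def)
  next
    case False
    then obtain J where J: "(\<integral>\<^sup>+ x. ennreal (exp (g x)) \<partial>M) = ennreal J" "J \<ge> 0"
      using ennreal_cases by (metis top_neq_ennreal)
    have "(\<integral>\<^sup>+ x. ennreal (exp (f x)) \<partial>M) \<le> ennreal (exp a * J)"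
      using int_le J by (simp add: ennreal_mult)
    moreover have "(\<integral>\<^sup>+ x. ennreal (exp (f x)) \<partial>M) \<noteq> \<top>"
      using calculation by (auto simp: top_unique)
    ultimately obtain I where I: "(\<integral>\<^sup>+ x. ennreal (exp (f x)) \<partial>M) = ennreal I" "I \<le> exp a * J"
      using J(2) by (cases "\<integral>\<^sup>+ x. ennreal (exp (f x)) \<partial>M") auto
    note fin = log_Eexp_eq_ln[OF M f I(1)]
    have "0 < exp a * J"
      using fin(2) I(2) by linarith
    then have "0 < J"
      by (simp add: zero_less_mult_iff)
    have "ln I \<le> ln (exp a * J)"
      using fin(2) I(2) by simp
    then have "ln I \<le> a + ln J"
      using \<open>0 < J\<close> by (simp add: ln_mult)
    then show ?thesis
      using fin J \<open>0 < J\<close> by (simp add: log_Eexp_def add.commute)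
  qed
qed

lemma scaled_log_Eexp_sqrt_le:
  assumes M: "prob_space M" and X: "X \<in> borel_measurable M"
    and nonneg: "\<And>x. x \<in> space M \<Longrightarrow> 0 \<le> X x"
    and b: "b > 0" and \<theta>: "\<theta> > 0" and \<beta>: "\<beta> \<ge> 0"
  shows "ereal (1 / b) * log_Eexp M (\<lambda>x. \<beta> * sqrt b * sqrt (X x))
           \<le> ereal (1 / b) * log_Eexp M (\<lambda>x. \<theta> * X x) + ereal (\<beta>\<^sup>2 / (4 * \<theta>))"
proof -
  have amgm: "\<beta> * sqrt b * sqrt (X x) \<le> \<theta> * X x + b * (\<beta>\<^sup>2 / (4 * \<theta>))" if "x \<in> space M" for x
  proof -
    have "0 \<le> (2 * \<theta> * sqrt (X x) - \<beta> * sqrt b)\<^sup>2 / (4 * \<theta>)"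
      using \<theta> by simp
    also have "\<dots> = \<theta> * X x + b * (\<beta>\<^sup>2 / (4 * \<theta>)) - \<beta> * sqrt b * sqrt (X x)"
      using \<theta> b nonneg[OF that] by (simp add: field_simps power2_eq_square)
    finally show ?thesis by simp
  qed
  have "log_Eexp M (\<lambda>x. \<beta> * sqrt b * sqrt (X x))
      \<le> log_Eexp M (\<lambda>x. \<theta> * X x) + ereal (b * (\<beta>\<^sup>2 / (4 * \<theta>)))"
    using M nonneg b \<beta> X amgm by (intro log_Eexp_le_add) auto
  then have "ereal (1 / b) * log_Eexp M (\<lambda>x. \<beta> * sqrt b * sqrt (X x))
      \<le> ereal (1 / b) * (log_Eexp M (\<lambda>x. \<theta> * X x) + ereal (b * (\<beta>\<^sup>2 / (4 * \<theta>))))"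
    using b by (intro ereal_mult_left_mono) auto
  also have "\<dots> = ereal (1 / b) * log_Eexp M (\<lambda>x. \<theta> * X x) + ereal (\<beta>\<^sup>2 / (4 * \<theta>))"
    using b by (subst ereal_distrib_left) auto
  finally show ?thesis .
qed

lemma liminf_scaled_log_Eexp_ge:
  fixes M :: "nat \<Rightarrow> 'a measure" and X :: "nat \<Rightarrow> 'a \<Rightarrow> real" and b :: "nat \<Rightarrow> real"
  assumes prob: "\<And>m. prob_space (M m)" and meas: "\<And>m. X m \<in> borel_measurable (M m)"
    and nonneg: "\<And>m x. x \<in> space (M m) \<Longrightarrow> 0 \<le> X m x" and bpos: "\<And>m. b m > 0"
    and \<theta>: "\<theta> > 0" and \<beta>: "\<beta> \<ge> 0"
    and sqrt_lower: "ereal (\<Lambda> + \<beta>\<^sup>2 / (4 * \<theta>))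
      \<le> liminf (\<lambda>m. ereal (1 / b m) * log_Eexp (M m) (\<lambda>x. \<beta> * sqrt (b m) * sqrt (X m x)))"
  shows "ereal \<Lambda> \<le> liminf (\<lambda>m. ereal (1 / b m) * log_Eexp (M m) (\<lambda>x. \<theta> * X m x))"
proof -
  have "ereal \<Lambda> + ereal (\<beta>\<^sup>2 / (4 * \<theta>))
      \<le> liminf (\<lambda>m. ereal (1 / b m) * log_Eexp (M m) (\<lambda>x. \<beta> * sqrt (b m) * sqrt (X m x)))"
    using sqrt_lower by simp
  also have "\<dots> \<le> liminf (\<lambda>m. ereal (1 / b m) * log_Eexp (M m) (\<lambda>x. \<theta> * X m x) + ereal (\<beta>\<^sup>2 / (4 * \<theta>)))"
    using scaled_log_Eexp_sqrt_le[OF prob meas nonneg bpos \<theta> \<beta>] by (intro Liminf_mono) auto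
  also have "\<dots> = liminf (\<lambda>m. ereal (1 / b m) * log_Eexp (M m) (\<lambda>x. \<theta> * X m x)) + ereal (\<beta>\<^sup>2 / (4 * \<theta>))"
    (is "_ = ?L + _") by (intro Liminf_add_ereal_right) auto
  finally show ?thesis
    by (cases ?L) auto
qed

lemma parabola_le_chord:
  fixes \<theta> a u \<delta> :: real
  assumes "\<theta> \<ge> 0" "a \<le> u" "u \<le> a + \<delta>"
  shows "\<theta> * u\<^sup>2 \<le> \<theta> * (2 * a + \<delta>) * u - \<theta> * a * (a + \<delta>)"
proof -
  have "\<theta> * ((u - a) * (u - a - \<delta>)) \<le> 0"
    using assms by (intro mult_nonneg_nonpos mult_nonneg_nonpos) auto
  then show ?thesis by (simp add: algebra_simps power2_eq_square)
qed

lemma parabola_le_grid_chord: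
  fixes \<theta> \<delta> u :: real and N :: nat
  assumes "\<theta> \<ge> 0" "\<delta> > 0" "u \<ge> 0" "u < real N * \<delta>"
  obtains k where "k < N" "\<theta> * u\<^sup>2 \<le> \<theta> * \<delta> * (2 * real k + 1) * u - \<theta> * \<delta>\<^sup>2 * real k * (real k + 1)"
proof
  define k where "k = nat \<lfloor>u / \<delta>\<rfloor>"
  have "real k \<le> u / \<delta>" "u / \<delta> < real k + 1"
    using assms floor_correct[of "u / \<delta>"] by (auto simp: k_def)
  then have k: "k * \<delta> \<le> u" "u \<le> k * \<delta> + \<delta>"
    using assms by (auto simp: field_simps)
  show "k < N"
    using mult_right_less_imp_less[of "real k" \<delta> "real N"] k(1) assms by linarith
  show "\<theta> * u\<^sup>2 \<le> \<theta> * \<delta> * (2 * real k + 1) * u - \<theta> * \<delta>\<^sup>2 * real k * (real k + 1)"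
    using parabola_le_chord[OF assms(1) k] by (simp add: algebra_simps power2_eq_square)
qed

lemma exp_le_chord_sum:
  fixes \<theta> \<theta>' \<delta> b x :: real and N :: nat
  assumes \<theta>: "0 \<le> \<theta>" "\<theta> \<le> \<theta>'" and \<delta>: "\<delta> > 0" and b: "b > 0" and x: "x \<ge> 0"
  shows "exp (\<theta> * x) \<le>
           (\<Sum>k<N. exp (- b * (\<theta> * \<delta>\<^sup>2 * real k * (real k + 1))) * exp (\<theta> * \<delta> * (2 * real k + 1) * sqrt b * sqrt x))
           + exp (- b * ((\<theta>' - \<theta>) * (real N * \<delta>)\<^sup>2)) * exp (\<theta>' * x)"
    (is "_ \<le> ?chords + ?tail")
proof -
  define u where "u = sqrt x / sqrt b"
  have "b * u = b / sqrt b * sqrt x"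
    by (simp add: u_def)
  then have u: "u \<ge> 0" "x = b * u\<^sup>2" "sqrt b * sqrt x = b * u"
    using b x by (auto simp: u_def power_divide real_div_sqrt)
  show ?thesis
  proof (cases "N * \<delta> \<le> u")
    case True
    then have "(real N * \<delta>)\<^sup>2 \<le> u\<^sup>2"
      using \<delta> by (intro power_mono) auto
    then have "(\<theta>' - \<theta>) * b * (real N * \<delta>)\<^sup>2 \<le> (\<theta>' - \<theta>) * b * u\<^sup>2"
      using \<theta> b by (intro mult_left_mono) auto
    then have "\<theta> * x \<le> - b * ((\<theta>' - \<theta>) * (real N * \<delta>)\<^sup>2) + \<theta>' * x"
      using u(2) by (simp add: algebra_simps)
    then have "exp (\<theta> * x) \<le> ?tail"
      by (simp add: mult_exp_exp)
    then show ?thesis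
      by (simp add: add_increasing sum_nonneg)
  next
    case False
    obtain k where "k < N"
      and chord: "\<theta> * u\<^sup>2 \<le> \<theta> * \<delta> * (2 * real k + 1) * u - \<theta> * \<delta>\<^sup>2 * real k * (real k + 1)"
      using \<theta>(1) \<delta> u(1) not_le[THEN iffD1, OF False] by (rule parabola_le_grid_chord)
    have "b * (\<theta> * u\<^sup>2) \<le> b * (\<theta> * \<delta> * (2 * real k + 1) * u - \<theta> * \<delta>\<^sup>2 * real k * (real k + 1))"
      using chord b by (intro mult_left_mono) auto
    moreover have "\<theta> * \<delta> * (2 * real k + 1) * sqrt b * sqrt x = \<theta> * \<delta> * (2 * real k + 1) * (b * u)"
      using u(3) by (simp add: mult.assoc)
    ultimately have "\<theta> * x \<le> - b * (\<theta> * \<delta>\<^sup>2 * real k * (real k + 1)) + \<theta> * \<delta> * (2 * real k + 1) * sqrt b * sqrt x"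
      using u(2) by (simp add: algebra_simps power2_eq_square)
    then have "exp (\<theta> * x) \<le> exp (- b * (\<theta> * \<delta>\<^sup>2 * real k * (real k + 1))) * exp (\<theta> * \<delta> * (2 * real k + 1) * sqrt b * sqrt x)"
      by (simp add: mult_exp_exp)
    also have "\<dots> \<le> ?chords"
      using \<open>k < N\<close> by (intro member_le_sum) auto
    finally show ?thesis
      by (simp add: add_increasing2)
  qed
qed

lemma nn_integral_exp_le_chord_sum:
  fixes \<theta> \<theta>' \<delta> b :: real and N :: nat
  assumes X: "X \<in> borel_measurable M" and nonneg: "\<And>x. x \<in> space M \<Longrightarrow> 0 \<le> X x"
    and \<theta>: "0 \<le> \<theta>" "\<theta> \<le> \<theta>'" and \<delta>: "\<delta> > 0" and b: "b > 0"
  shows "(\<integral>\<^sup>+ x. ennreal (exp (\<theta> * X x)) \<partial>M) \<le>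
           (\<Sum>k<N. ennreal (exp (- b * (\<theta> * \<delta>\<^sup>2 * real k * (real k + 1))))
                    * (\<integral>\<^sup>+ x. ennreal (exp (\<theta> * \<delta> * (2 * real k + 1) * sqrt b * sqrt (X x))) \<partial>M))
           + ennreal (exp (- b * ((\<theta>' - \<theta>) * (real N * \<delta>)\<^sup>2))) * (\<integral>\<^sup>+ x. ennreal (exp (\<theta>' * X x)) \<partial>M)"
proof -
  have "(\<integral>\<^sup>+ x. ennreal (exp (\<theta> * X x)) \<partial>M) \<le> (\<integral>\<^sup>+ x.
           (\<Sum>k<N. ennreal (exp (- b * (\<theta> * \<delta>\<^sup>2 * real k * (real k + 1))))
                    * ennreal (exp (\<theta> * \<delta> * (2 * real k + 1) * sqrt b * sqrt (X x))))
           + ennreal (exp (- b * ((\<theta>' - \<theta>) * (real N * \<delta>)\<^sup>2))) * ennreal (exp (\<theta>' * X x)) \<partial>M)"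
  proof (rule nn_integral_mono)
    fix x assume "x \<in> space M"
    let ?a = "\<lambda>k::nat. exp (- b * (\<theta> * \<delta>\<^sup>2 * real k * (real k + 1)))"
    let ?f = "\<lambda>k::nat. exp (\<theta> * \<delta> * (2 * real k + 1) * sqrt b * sqrt (X x))"
    let ?c = "exp (- b * ((\<theta>' - \<theta>) * (real N * \<delta>)\<^sup>2))"
    have "ennreal (exp (\<theta> * X x)) \<le> ennreal ((\<Sum>k<N. ?a k * ?f k) + ?c * exp (\<theta>' * X x))"
      using exp_le_chord_sum[OF \<theta> \<delta> b nonneg[OF \<open>x \<in> space M\<close>], of N] by (rule ennreal_leI)
    also have "\<dots> = (\<Sum>k<N. ennreal (?a k) * ennreal (?f k)) + ennreal ?c * ennreal (exp (\<theta>' * X x))"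
      by (simp add: ennreal_plus sum_nonneg ennreal_mult flip: sum_ennreal)
    finally show "ennreal (exp (\<theta> * X x)) \<le>
           (\<Sum>k<N. ennreal (exp (- b * (\<theta> * \<delta>\<^sup>2 * real k * (real k + 1))))
                    * ennreal (exp (\<theta> * \<delta> * (2 * real k + 1) * sqrt b * sqrt (X x))))
           + ennreal (exp (- b * ((\<theta>' - \<theta>) * (real N * \<delta>)\<^sup>2))) * ennreal (exp (\<theta>' * X x))" .
  qed
  also have "\<dots> = (\<Sum>k<N. ennreal (exp (- b * (\<theta> * \<delta>\<^sup>2 * real k * (real k + 1))))
                    * (\<integral>\<^sup>+ x. ennreal (exp (\<theta> * \<delta> * (2 * real k + 1) * sqrt b * sqrt (X x))) \<partial>M))
           + ennreal (exp (- b * ((\<theta>' - \<theta>) * (real N * \<delta>)\<^sup>2))) * (\<integral>\<^sup>+ x. ennreal (exp (\<theta>' * X x)) \<partial>M)"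
    using X by (simp add: nn_integral_add nn_integral_sum nn_integral_cmult)
  finally show ?thesis .
qed

lemma ennreal_exp_mult_le:
  assumes "I \<le> ennreal (exp r)" "s + r \<le> t"
  shows "ennreal (exp s) * I \<le> ennreal (exp t)"
proof -
  have "ennreal (exp s) * I \<le> ennreal (exp s) * ennreal (exp r)"
    using assms(1) by (rule mult_left_mono) simp
  also have "\<dots> \<le> ennreal (exp t)"
    using assms(2) by (simp add: ennreal_mult[symmetric] mult_exp_exp)
  finally show ?thesis .
qed

lemma nn_integral_exp_le_by_chords:
  fixes \<theta> \<theta>' \<delta> b r :: real and N :: nat
  assumes X: "X \<in> borel_measurable M" and nonneg: "\<And>x. x \<in> space M \<Longrightarrow> 0 \<le> X x"
    and \<theta>: "0 \<le> \<theta>" "\<theta> \<le> \<theta>'" and \<delta>: "\<delta> > 0" and b: "b > 0"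
    and chords: "\<And>k. k < N \<Longrightarrow> (\<integral>\<^sup>+ x. ennreal (exp (\<theta> * \<delta> * (2 * real k + 1) * sqrt b * sqrt (X x))) \<partial>M)
                   \<le> ennreal (exp (b * (r + \<theta> * \<delta>\<^sup>2 * real k * (real k + 1))))"
    and tail: "(\<integral>\<^sup>+ x. ennreal (exp (\<theta>' * X x)) \<partial>M)
                 \<le> ennreal (exp (b * (r + (\<theta>' - \<theta>) * (real N * \<delta>)\<^sup>2)))"
  shows "(\<integral>\<^sup>+ x. ennreal (exp (\<theta> * X x)) \<partial>M) \<le> ennreal ((real N + 1) * exp (b * r))"
proof -
  have "(\<integral>\<^sup>+ x. ennreal (exp (\<theta> * X x)) \<partial>M) \<le>
           (\<Sum>k<N. ennreal (exp (- b * (\<theta> * \<delta>\<^sup>2 * real k * (real k + 1))))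
                    * (\<integral>\<^sup>+ x. ennreal (exp (\<theta> * \<delta> * (2 * real k + 1) * sqrt b * sqrt (X x))) \<partial>M))
           + ennreal (exp (- b * ((\<theta>' - \<theta>) * (real N * \<delta>)\<^sup>2))) * (\<integral>\<^sup>+ x. ennreal (exp (\<theta>' * X x)) \<partial>M)"
    using X nonneg \<theta> \<delta> b by (rule nn_integral_exp_le_chord_sum)
  also have "\<dots> \<le> (\<Sum>k<N. ennreal (exp (b * r))) + ennreal (exp (b * r))"
  proof (intro add_mono sum_mono)
    show "ennreal (exp (- b * (\<theta> * \<delta>\<^sup>2 * real k * (real k + 1))))
            * (\<integral>\<^sup>+ x. ennreal (exp (\<theta> * \<delta> * (2 * real k + 1) * sqrt b * sqrt (X x))) \<partial>M)
          \<le> ennreal (exp (b * r))" if "k \<in> {..<N}" for k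
      using that by (intro ennreal_exp_mult_le[OF chords]) (auto simp: algebra_simps)
    show "ennreal (exp (- b * ((\<theta>' - \<theta>) * (real N * \<delta>)\<^sup>2))) * (\<integral>\<^sup>+ x. ennreal (exp (\<theta>' * X x)) \<partial>M)
          \<le> ennreal (exp (b * r))"
      by (intro ennreal_exp_mult_le[OF tail]) (simp add: algebra_simps)
  qed
  also have "\<dots> = ennreal ((real N + 1) * exp (b * r))"
    by (simp add: ennreal_of_nat_eq_real_of_nat ennreal_mult'[symmetric] ennreal_plus[symmetric]
        distrib_right del: ennreal_plus)
  finally show ?thesis .
qed

lemma scaled_log_Eexp_le_by_chords:
  fixes \<theta> \<theta>' \<delta> b r :: real and N :: nat
  assumes M: "prob_space M" and X: "X \<in> borel_measurable M"
    and nonneg: "\<And>x. x \<in> space M \<Longrightarrow> 0 \<le> X x"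
    and \<theta>: "0 \<le> \<theta>" "\<theta> \<le> \<theta>'" and \<delta>: "\<delta> > 0" and b: "b > 0"
    and chords: "\<And>k. k < N \<Longrightarrow> ereal (1 / b) * log_Eexp M (\<lambda>x. \<theta> * \<delta> * (2 * real k + 1) * sqrt b * sqrt (X x))
                   \<le> ereal (r + \<theta> * \<delta>\<^sup>2 * real k * (real k + 1))"
    and tail: "ereal (1 / b) * log_Eexp M (\<lambda>x. \<theta>' * X x) \<le> ereal (r + (\<theta>' - \<theta>) * (real N * \<delta>)\<^sup>2)"
  shows "ereal (1 / b) * log_Eexp M (\<lambda>x. \<theta> * X x) \<le> ereal (r + ln (real N + 1) / b)"
proof -
  have "(\<integral>\<^sup>+ x. ennreal (exp (\<theta> * X x)) \<partial>M) \<le> ennreal ((real N + 1) * exp (b * r))"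
  proof (rule nn_integral_exp_le_by_chords[OF X nonneg \<theta> \<delta> b])
    show "(\<integral>\<^sup>+ x. ennreal (exp (\<theta> * \<delta> * (2 * real k + 1) * sqrt b * sqrt (X x))) \<partial>M)
        \<le> ennreal (exp (b * (r + \<theta> * \<delta>\<^sup>2 * real k * (real k + 1))))" if "k < N" for k
      using chords[OF that] scaled_log_Eexp_le_iff[OF M _ b] \<theta> \<delta> b nonneg by simp
    show "(\<integral>\<^sup>+ x. ennreal (exp (\<theta>' * X x)) \<partial>M) \<le> ennreal (exp (b * (r + (\<theta>' - \<theta>) * (real N * \<delta>)\<^sup>2)))"
      using tail scaled_log_Eexp_le_iff[OF M _ b] \<theta> nonneg by simp
  qed
  also have "(real N + 1) * exp (b * r) = exp (b * (r + ln (real N + 1) / b))"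
    using b by (simp add: distrib_left exp_add algebra_simps)
  finally show ?thesis
    using scaled_log_Eexp_le_iff[OF M _ b] \<theta> nonneg by simp
qed

lemma ex_le_mult_of_nat_square:
  fixes a c :: real
  assumes "c > 0"
  obtains N :: nat where "a \<le> c * (real N)\<^sup>2"
proof -
  obtain N :: nat where "a / c \<le> real N"
    using real_arch_simple by blast
  moreover have "real N \<le> (real N)\<^sup>2"
    by (metis le_square of_nat_le_iff of_nat_mult power2_eq_square)
  ultimately have "a \<le> c * (real N)\<^sup>2"
    using assms by (simp add: pos_divide_le_eq mult.commute order_trans mult_left_mono)
  then show ?thesis ..
qed

lemma eventually_scaled_log_Eexp_le:
  fixes M :: "nat \<Rightarrow> 'a measure" and X :: "nat \<Rightarrow> 'a \<Rightarrow> real" and b :: "nat \<Rightarrow> real"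
  assumes prob: "\<And>m. prob_space (M m)" and meas: "\<And>m. X m \<in> borel_measurable (M m)"
    and nonneg: "\<And>m x. x \<in> space (M m) \<Longrightarrow> 0 \<le> X m x" and bpos: "\<And>m. b m > 0"
    and binf: "filterlim b at_top sequentially"
    and \<theta>: "0 < \<theta>" "\<theta> < \<theta>'"
    and tail: "eventually (\<lambda>m. ereal (1 / b m) * log_Eexp (M m) (\<lambda>x. \<theta>' * X m x) \<le> ereal A) sequentially"
    and sqrt_upper: "\<And>\<beta>. \<beta> > 0 \<Longrightarrow> limsup (\<lambda>m. ereal (1 / b m) * log_Eexp (M m) (\<lambda>x. \<beta> * sqrt (b m) * sqrt (X m x)))
                       \<le> ereal (\<Lambda> + \<beta>\<^sup>2 / (4 * \<theta>))"
    and e: "e > 0"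
  shows "eventually (\<lambda>m. ereal (1 / b m) * log_Eexp (M m) (\<lambda>x. \<theta> * X m x) \<le> ereal (\<Lambda> + e)) sequentially"
proof -
  \<comment> \<open>With \<theta> \<delta>^2 = e, the k-th chord loses e/4 against \<Lambda> + \<beta>_k^2 / (4 \<theta>) and the limsup
    gives away another e/4; N is chosen so that the tail is at most \<Lambda> + e/2, and the last
    e/2 absorbs the factor N + 1 once b is large.\<close>
  define \<delta> where "\<delta> = sqrt (e / \<theta>)"
  have \<delta>: "\<delta> > 0" "\<theta> * \<delta>\<^sup>2 = e"
    using \<theta> e by (auto simp: \<delta>_def)
  obtain N :: nat where "A - \<Lambda> \<le> (\<theta>' - \<theta>) * \<delta>\<^sup>2 * (real N)\<^sup>2"
    by (rule ex_le_mult_of_nat_square[where c = "(\<theta>' - \<theta>) * \<delta>\<^sup>2" and a = "A - \<Lambda>"])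
      (use \<theta> \<delta> in auto)
  then have tail_room: "A \<le> (\<Lambda> + e / 2) + (\<theta>' - \<theta>) * (real N * \<delta>)\<^sup>2"
    using e by (simp add: power_mult_distrib algebra_simps)
  define \<beta> where "\<beta> k = \<theta> * \<delta> * (2 * real k + 1)" for k :: nat
  have chord_room: "\<Lambda> + (\<beta> k)\<^sup>2 / (4 * \<theta>) + e / 4 = (\<Lambda> + e / 2) + \<theta> * \<delta>\<^sup>2 * real k * (real k + 1)" for k
    using \<theta> \<delta>(2)[symmetric] by (simp add: \<beta>_def field_simps power2_eq_square)
  have "eventually (\<lambda>m. \<forall>k\<in>{..<N}. ereal (1 / b m) * log_Eexp (M m) (\<lambda>x. \<beta> k * sqrt (b m) * sqrt (X m x))
          \<le> ereal (\<Lambda> + (\<beta> k)\<^sup>2 / (4 * \<theta>) + e / 4)) sequentially"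
  proof (intro eventually_ball_finite ballI)
    fix k
    have "limsup (\<lambda>m. ereal (1 / b m) * log_Eexp (M m) (\<lambda>x. \<beta> k * sqrt (b m) * sqrt (X m x)))
        \<le> ereal (\<Lambda> + (\<beta> k)\<^sup>2 / (4 * \<theta>))"
      using \<theta> \<delta> by (intro sqrt_upper) (simp add: \<beta>_def)
    also have "\<dots> < ereal (\<Lambda> + (\<beta> k)\<^sup>2 / (4 * \<theta>) + e / 4)"
      using e by simp
    finally show "eventually (\<lambda>m. ereal (1 / b m) * log_Eexp (M m) (\<lambda>x. \<beta> k * sqrt (b m) * sqrt (X m x))
          \<le> ereal (\<Lambda> + (\<beta> k)\<^sup>2 / (4 * \<theta>) + e / 4)) sequentially"
      by (rule eventually_mono[OF Limsup_lessD]) auto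
  qed simp
  moreover have "eventually (\<lambda>m. 2 * ln (real N + 1) / e \<le> b m) sequentially"
    using binf by (simp add: filterlim_at_top)
  ultimately show ?thesis
    using tail
  proof eventually_elim
    case (elim m)
    have "ereal (1 / b m) * log_Eexp (M m) (\<lambda>x. \<theta> * X m x) \<le> ereal ((\<Lambda> + e / 2) + ln (real N + 1) / b m)"
    proof (rule scaled_log_Eexp_le_by_chords[OF prob meas nonneg _ _ \<delta>(1) bpos])
      show "ereal (1 / b m) * log_Eexp (M m) (\<lambda>x. \<theta> * \<delta> * (2 * real k + 1) * sqrt (b m) * sqrt (X m x))
          \<le> ereal ((\<Lambda> + e / 2) + \<theta> * \<delta>\<^sup>2 * real k * (real k + 1))" if "k < N" for k
        using elim(1) that by (simp add: chord_room flip: \<beta>_def)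
      show "ereal (1 / b m) * log_Eexp (M m) (\<lambda>x. \<theta>' * X m x) \<le> ereal ((\<Lambda> + e / 2) + (\<theta>' - \<theta>) * (real N * \<delta>)\<^sup>2)"
        using elim(3) tail_room order.trans by fastforce
    qed (use \<theta> in auto)
    also have "\<dots> \<le> ereal (\<Lambda> + e)"
      using elim(2) e bpos[of m] by (simp add: field_simps)
    finally show ?case .
  qed
qed

lemma limsup_scaled_log_Eexp_le:
  fixes M :: "nat \<Rightarrow> 'a measure" and X :: "nat \<Rightarrow> 'a \<Rightarrow> real" and b :: "nat \<Rightarrow> real"
  assumes prob: "\<And>m. prob_space (M m)" and meas: "\<And>m. X m \<in> borel_measurable (M m)"
    and nonneg: "\<And>m x. x \<in> space (M m) \<Longrightarrow> 0 \<le> X m x" and bpos: "\<And>m. b m > 0"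
    and binf: "filterlim b at_top sequentially"
    and \<theta>: "0 < \<theta>" "\<theta> < \<theta>'"
    and finite: "limsup (\<lambda>m. ereal (1 / b m) * log_Eexp (M m) (\<lambda>x. \<theta>' * X m x)) < \<infinity>"
    and sqrt_upper: "\<And>\<beta>. \<beta> > 0 \<Longrightarrow> limsup (\<lambda>m. ereal (1 / b m) * log_Eexp (M m) (\<lambda>x. \<beta> * sqrt (b m) * sqrt (X m x)))
                       \<le> ereal (\<Lambda> + \<beta>\<^sup>2 / (4 * \<theta>))"
  shows "limsup (\<lambda>m. ereal (1 / b m) * log_Eexp (M m) (\<lambda>x. \<theta> * X m x)) \<le> ereal \<Lambda>"
proof -
  obtain A where "limsup (\<lambda>m. ereal (1 / b m) * log_Eexp (M m) (\<lambda>x. \<theta>' * X m x)) < ereal A"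
    using less_PInf_Ex_of_nat[THEN iffD1, OF less_imp_neq[OF finite]] by blast
  then have tail: "eventually (\<lambda>m. ereal (1 / b m) * log_Eexp (M m) (\<lambda>x. \<theta>' * X m x) \<le> ereal A) sequentially"
    by (rule eventually_mono[OF Limsup_lessD]) auto
  show ?thesis
  proof (rule ereal_le_epsilon2)
    fix e :: real assume "e > 0"
    then have "limsup (\<lambda>m. ereal (1 / b m) * log_Eexp (M m) (\<lambda>x. \<theta> * X m x)) \<le> ereal (\<Lambda> + e)"
      by (intro Limsup_bounded eventually_scaled_log_Eexp_le[OF prob meas nonneg bpos binf \<theta> tail sqrt_upper])
    then show "limsup (\<lambda>m. ereal (1 / b m) * log_Eexp (M m) (\<lambda>x. \<theta> * X m x)) \<le> ereal \<Lambda> + ereal e"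
      by simp
  qed
qed

lemma liminf_scaled_log_Eexp_ge_power:
  fixes M :: "nat \<Rightarrow> 'a measure" and X :: "nat \<Rightarrow> 'a \<Rightarrow> real" and b :: "nat \<Rightarrow> real"
  assumes prob: "\<And>m. prob_space (M m)" and meas: "\<And>m. X m \<in> borel_measurable (M m)"
    and nonneg: "\<And>m x. x \<in> space (M m) \<Longrightarrow> 0 \<le> X m x" and bpos: "\<And>m. b m > 0"
    and p: "p > 0" and C0: "C0 > 0" and \<theta>: "\<theta> > 0"
    and sqrt_lower: "\<And>\<beta>. \<beta> > 0 \<Longrightarrow> ereal (sqrt_mgf_rate p C0 \<beta>)
                       \<le> liminf (\<lambda>m. ereal (1 / b m) * log_Eexp (M m) (\<lambda>x. \<beta> * sqrt (b m) * sqrt (X m x)))"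
  shows "ereal (C0 * \<theta> powr p) \<le> liminf (\<lambda>m. ereal (1 / b m) * log_Eexp (M m) (\<lambda>x. \<theta> * X m x))"
proof -
  obtain \<beta> where \<beta>: "\<beta> > 0" "sqrt_mgf_rate p C0 \<beta> = C0 * \<theta> powr p + \<beta>\<^sup>2 / (4 * \<theta>)"
    using sqrt_mgf_rate_attained[OF p C0 \<theta>] .
  have "ereal (C0 * \<theta> powr p + \<beta>\<^sup>2 / (4 * \<theta>))
      \<le> liminf (\<lambda>m. ereal (1 / b m) * log_Eexp (M m) (\<lambda>x. \<beta> * sqrt (b m) * sqrt (X m x)))"
    using sqrt_lower[OF \<beta>(1)] unfolding \<beta>(2) .
  with prob meas nonneg bpos \<theta> less_imp_le[OF \<beta>(1)] show ?thesis
    by (rule liminf_scaled_log_Eexp_ge)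
qed

lemma limsup_scaled_log_Eexp_le_power:
  fixes M :: "nat \<Rightarrow> 'a measure" and X :: "nat \<Rightarrow> 'a \<Rightarrow> real" and b :: "nat \<Rightarrow> real"
  assumes prob: "\<And>m. prob_space (M m)" and meas: "\<And>m. X m \<in> borel_measurable (M m)"
    and nonneg: "\<And>m x. x \<in> space (M m) \<Longrightarrow> 0 \<le> X m x" and bpos: "\<And>m. b m > 0"
    and binf: "filterlim b at_top sequentially"
    and p: "p > 0" and C0: "C0 > 0" and \<theta>: "\<theta> > 0"
    and finite: "limsup (\<lambda>m. ereal (1 / b m) * log_Eexp (M m) (\<lambda>x. 2 * \<theta> * X m x)) < \<infinity>"
    and sqrt_upper: "\<And>\<beta>. \<beta> > 0 \<Longrightarrow> limsup (\<lambda>m. ereal (1 / b m) * log_Eexp (M m) (\<lambda>x. \<beta> * sqrt (b m) * sqrt (X m x)))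
                       \<le> ereal (sqrt_mgf_rate p C0 \<beta>)"
  shows "limsup (\<lambda>m. ereal (1 / b m) * log_Eexp (M m) (\<lambda>x. \<theta> * X m x)) \<le> ereal (C0 * \<theta> powr p)"
proof (rule limsup_scaled_log_Eexp_le[OF prob meas nonneg bpos binf \<theta> _ finite])
  show "\<theta> < 2 * \<theta>" using \<theta> by simp
  show "limsup (\<lambda>m. ereal (1 / b m) * log_Eexp (M m) (\<lambda>x. \<beta> * sqrt (b m) * sqrt (X m x)))
          \<le> ereal (C0 * \<theta> powr p + \<beta>\<^sup>2 / (4 * \<theta>))" if "\<beta> > 0" for \<beta>
    by (rule order.trans[OF sqrt_upper[OF that]]) (use sqrt_mgf_rate_le[OF p C0 that \<theta>] in simp)
qed

lemma Limsup_le_Liminf_imp_tendsto: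
  fixes f :: "'b \<Rightarrow> 'a :: {complete_linorder, linorder_topology}"
  assumes "F \<noteq> bot" "Limsup F f \<le> c" "c \<le> Liminf F f"
  shows "(f \<longlongrightarrow> c) F"
proof (rule Liminf_eq_Limsup)
  show "Liminf F f = c" "Limsup F f = c"
    using assms Liminf_le_Limsup[OF assms(1), of f] by (simp_all add: order.antisym)
qed (use assms(1) in simp)

theorem lemmaA2:
  fixes M :: "nat \<Rightarrow> 'a measure" and X :: "nat \<Rightarrow> 'a \<Rightarrow> real"
    and b :: "nat \<Rightarrow> real" and p C0 :: real
  assumes prob: "\<And>m. prob_space (M m)"
    and meas: "\<And>m. X m \<in> borel_measurable (M m)"
    and nonneg: "\<And>m x. x \<in> space (M m) \<Longrightarrow> X m x \<ge> 0"
    and bpos: "\<And>m. b m > 0"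
    and binf: "filterlim b at_top sequentially"
    and p: "p > 1" and C0: "C0 > 0"
  shows
    "((\<forall>\<beta>>0. limsup (\<lambda>m. ereal (1 / b m) * log_Eexp (M m) (\<lambda>x. \<beta> * X m x))
                 \<le> ereal (C0 * \<beta> powr p)
            \<and> liminf (\<lambda>m. ereal (1 / b m) * log_Eexp (M m) (\<lambda>x. \<beta> * sqrt (b m) * sqrt (X m x)))
                 \<ge> ereal ((p + 1) / p * (p * C0) powr (1 / (p + 1)) * (\<beta> / 2) powr (2 * p / (p + 1))))
       \<longrightarrow> (\<forall>\<beta>>0. (\<lambda>m. ereal (1 / b m) * log_Eexp (M m) (\<lambda>x. \<beta> * X m x))
                    \<longlonglongrightarrow> ereal (C0 * \<beta> powr p)))
     \<and>
     ((\<forall>\<beta>>0. limsup (\<lambda>m. ereal (1 / b m) * log_Eexp (M m) (\<lambda>x. \<beta> * X m x)) < \<infinity>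
            \<and> (\<lambda>m. ereal (1 / b m) * log_Eexp (M m) (\<lambda>x. \<beta> * sqrt (b m) * sqrt (X m x)))
                 \<longlonglongrightarrow> ereal ((p + 1) / p * (p * C0) powr (1 / (p + 1)) * (\<beta> / 2) powr (2 * p / (p + 1))))
       \<longrightarrow> (\<forall>\<beta>>0. (\<lambda>m. ereal (1 / b m) * log_Eexp (M m) (\<lambda>x. \<beta> * X m x))
                    \<longlonglongrightarrow> ereal (C0 * \<beta> powr p)))"
  apply (intro conjI impI allI)
  subgoal premises hyp for \<theta>
  proof -
    have "ereal (C0 * \<theta> powr p) \<le> liminf (\<lambda>m. ereal (1 / b m) * log_Eexp (M m) (\<lambda>x. \<theta> * X m x))"
      using prob meas nonneg bpos _ C0 hyp(2)
      by (rule liminf_scaled_log_Eexp_ge_power) (use hyp(1) p in \<open>auto simp: sqrt_mgf_rate_def\<close>)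
    with hyp show ?thesis
      by (intro Limsup_le_Liminf_imp_tendsto) auto
  qed
  subgoal premises hyp for \<theta>
  proof -
    have sqrt_liminf: "liminf (\<lambda>m. ereal (1 / b m) * log_Eexp (M m) (\<lambda>x. \<beta> * sqrt (b m) * sqrt (X m x)))
        = ereal (sqrt_mgf_rate p C0 \<beta>)"
      and sqrt_limsup: "limsup (\<lambda>m. ereal (1 / b m) * log_Eexp (M m) (\<lambda>x. \<beta> * sqrt (b m) * sqrt (X m x)))
        = ereal (sqrt_mgf_rate p C0 \<beta>)" if "\<beta> > 0" for \<beta>
      using hyp(1) that unfolding sqrt_mgf_rate_def by (auto intro!: lim_imp_Liminf lim_imp_Limsup)
    have "ereal (C0 * \<theta> powr p) \<le> liminf (\<lambda>m. ereal (1 / b m) * log_Eexp (M m) (\<lambda>x. \<theta> * X m x))"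
      using prob meas nonneg bpos _ C0 hyp(2)
      by (rule liminf_scaled_log_Eexp_ge_power) (use p sqrt_liminf in simp_all)
    moreover have "limsup (\<lambda>m. ereal (1 / b m) * log_Eexp (M m) (\<lambda>x. \<theta> * X m x)) \<le> ereal (C0 * \<theta> powr p)"
      using prob meas nonneg bpos binf _ C0 hyp(2)
      by (rule limsup_scaled_log_Eexp_le_power) (use p hyp sqrt_limsup in simp_all)
    ultimately show ?thesis
      by (intro Limsup_le_Liminf_imp_tendsto) auto
  qed
  done

end
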